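(* Let $S\in\{0,1\}^\infty$, let $f:\{0,1\}^\infty\to\{0,1\}^\infty$ be ILFS computable, and let $S'=f(S)$. If $S'$ is finite-state deep, then $S$ is finite-state deep.
   Context: A finite-state transducer (FST) is a 4-tuple $T=(Q,\delta,\nu,q_0)$ with $Q$ a nonempty finite set of states, $\delta:Q\times\{0,1\}\to Q$, $\nu:Q\times\{0,1\}\to\{0,1\}^*$, $q_0\in Q$, every state reachable from $q_0$; $\widehat\delta(\lambda)=q_0$, $\widehat\delta(xa)=\delta(\widehat\delta(x),a)$, $T(\lambda)=\lambda$, $T(xa)=T(x)\nu(\widehat\delta(x),a)$. $T$ is information lossless (IL) if $x\mapsto(T(x),\widehat\delta(x))$ is one-to-one; an ILFST is an IL FST. A function $f:\{0,1\}^\infty\to\{0,1\}^\infty$ is ILFS computable if there is an ILFST $T$ such that for every sequence $S$, $\lim_{n\to\infty}|T(S\upharpoonright n)|=\infty$ and $T(S\upharpoonright n)$ is a prefix of $f(S)$ for all $n$, where $S\upharpoonright n$ is the first $n$ bits of $S$. Fix a standard binary representation $\sigma_T$ of each FST, $|T|=|\sigma_T|$, $\mathrm{FST}^{\leq k}=\{T:|T|\le k\}$, and $\mathrm{FS}^k(x)=\min\{|p|:\exists T\in\mathrm{FST}^{\le k},\ T(p)=x\}$. $S$ is finite-state deep if $(\exists\alpha>0)(\forall k\in\mathbb{N})(\exists k'\in\mathbb{N})(\exists^\infty n\in\mathbb{N})\ \mathrm{FS}^k(S\upharpoonright n)-\mathrm{FS}^{k'}(S\upharpoonright n)\ge\alpha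 n$. *)

theory Defs
  imports Complex_Main "HOL-Library.Extended_Real"
begin

text \<open>Binary strings are bool lists (True = 1, False = 0); infinite binary
sequences are functions nat \<Rightarrow> bool.\<close>

definition seq_prefix :: "(nat \<Rightarrow> bool) \<Rightarrow> nat \<Rightarrow> bool list" where
  "seq_prefix S n = map S [0..<n]"

text \<open>A finite-state transducer: states are 0 .. nstates-1; the i-th entry of the
transition table is (delta(i,0), delta(i,1), nu(i,0), nu(i,1)); start is q0.\<close>

datatype fst = FST (nstates: nat) (trans: "(nat \<times> nat \<times> bool list \<times> bool list) list") (start: nat)

definition delta :: "fst \<Rightarrow> nat \<Rightarrow> bool \<Rightarrow> nat" where
  "delta T q b = (case trans T ! q of (d0, d1, _, _) \<Rightarrow> if b then d1 else d0)"

definition nu :: "fst \<Rightarrow> nat \<Rightarrow> bool \<Rightarrow> bool list" where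
  "nu T q b = (case trans T ! q of (_, _, v0, v1) \<Rightarrow> if b then v1 else v0)"

definition delta_hat :: "fst \<Rightarrow> bool list \<Rightarrow> nat" where
  "delta_hat T x = foldl (delta T) (start T) x"

text \<open>Output T(x), satisfying T(\<lambda>) = \<lambda> and T(xa) = T(x) nu(delta_hat(x), a).\<close>
definition fst_out :: "fst \<Rightarrow> bool list \<Rightarrow> bool list" where
  "fst_out T x = concat (map (\<lambda>i. nu T (delta_hat T (take i x)) (x ! i)) [0..<length x])"

definition wf_fst :: "fst \<Rightarrow> bool" where
  "wf_fst T \<longleftrightarrow> 0 < nstates T \<and> length (trans T) = nstates T \<and> start T < nstates T
     \<and> (\<forall>q<nstates T. \<forall>b. delta T q b < nstates T)
     \<and> (\<forall>q<nstates T. \<exists>x. delta_hat T x = q)"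

definition info_lossless :: "fst \<Rightarrow> bool" where
  "info_lossless T \<longleftrightarrow> inj (\<lambda>x. (fst_out T x, delta_hat T x))"

definition ILFS_computable :: "((nat \<Rightarrow> bool) \<Rightarrow> (nat \<Rightarrow> bool)) \<Rightarrow> bool" where
  "ILFS_computable f \<longleftrightarrow> (\<exists>T. wf_fst T \<and> info_lossless T \<and>
     (\<forall>S. filterlim (\<lambda>n. length (fst_out T (seq_prefix S n))) at_top sequentially
        \<and> (\<forall>n. fst_out T (seq_prefix S n) = seq_prefix (f S) (length (fst_out T (seq_prefix S n))))))"

text \<open>Standard (prefix-free, injective) binary representation sigma_T of an FST.\<close>
definition enc_nat :: "nat \<Rightarrow> bool list" where
  "enc_nat n = replicate n True @ [False]"

definition enc_bits :: "bool list \<Rightarrow> bool list" where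
  "enc_bits w = concat (map (\<lambda>b. [True, b]) w) @ [False]"

definition enc_entry :: "nat \<times> nat \<times> bool list \<times> bool list \<Rightarrow> bool list" where
  "enc_entry e = (case e of (a, b, u, v) \<Rightarrow> enc_nat a @ enc_nat b @ enc_bits u @ enc_bits v)"

definition sigma :: "fst \<Rightarrow> bool list" where
  "sigma T = enc_nat (nstates T) @ enc_nat (start T) @ concat (map enc_entry (trans T))"

definition fst_size :: "fst \<Rightarrow> nat" where
  "fst_size T = length (sigma T)"

definition FS :: "nat \<Rightarrow> bool list \<Rightarrow> enat" where
  "FS k x = (INF p\<in>{p. \<exists>T. wf_fst T \<and> fst_size T \<le> k \<and> fst_out T p = x}. enat (length p))"

definition fs_deep :: "(nat \<Rightarrow> bool) \<Rightarrow> bool" where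
  "fs_deep S \<longleftrightarrow> (\<exists>\<alpha>::real>0. \<forall>k. \<exists>k'. \<exists>\<^sub>\<infinity>n.
     ereal_of_enat (FS k' (seq_prefix S n)) + ereal (\<alpha> * real n) \<le> ereal_of_enat (FS k (seq_prefix S n)))"

end

theory Submission
  imports Defs "HOL-Library.Sublist" "HOL-Library.Infinite_Set"
begin

text \<open>Let \<open>T\<close> be an information lossless transducer computing \<open>f\<close> and \<open>S' = f S\<close>, so that
  \<open>T(S\<restriction>n)\<close> is a prefix of \<open>S'\<close>. Composing a compressor of \<open>S\<restriction>n\<close> with \<open>T\<close> and truncating
  its output compresses every prefix \<open>S'\<restriction>m\<close> of \<open>T(S\<restriction>n)\<close> at least as well, at the price of a
  larger transducer; so low complexity transfers forward. Conversely, a program \<open>p\<close> for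
  \<open>S'\<restriction>m\<close> on a small transducer \<open>B\<close> yields a program for \<open>S\<restriction>n\<close>: a decoder runs \<open>B\<close> on \<open>p\<close>
  and replaces each block of about \<open>c\<close> bits of \<open>T\<close>'s output by its preimage, which information
  losslessness makes unique once the final state of \<open>T\<close> is supplied as a constant amount of
  advice. The advice costs \<open>O(m / c)\<close> bits, which is a small fraction of the depth gap \<open>\<alpha> m\<close>
  of \<open>S'\<close> for large \<open>c\<close>. Finally, an information lossless transducer cannot stay silent
  for \<open>nstates T\<close> steps, so \<open>n \<le> nstates T (m + 1)\<close> and the gap \<open>\<alpha> m\<close> at \<open>S'\<restriction>m\<close> becomes a
  gap linear in \<open>n\<close> at \<open>S\<restriction>n\<close>.\<close>

section \<open>Abstract machines\<close>

fun machine_out :: "('s \<Rightarrow> bool \<Rightarrow> 's) \<Rightarrow> ('s \<Rightarrow> bool \<Rightarrow> bool list) \<Rightarrow> 's \<Rightarrow> bool list \<Rightarrow> bool list"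
  where
    "machine_out \<delta> \<nu> s [] = []"
  | "machine_out \<delta> \<nu> s (b # x) = \<nu> s b @ machine_out \<delta> \<nu> (\<delta> s b) x"

lemma machine_out_append:
  "machine_out \<delta> \<nu> s (x @ y) = machine_out \<delta> \<nu> s x @ machine_out \<delta> \<nu> (foldl \<delta> s x) y"
  by (induction x arbitrary: s) auto

lemma prefix_machine_out:
  "prefix x y \<Longrightarrow> prefix (machine_out \<delta> \<nu> s x) (machine_out \<delta> \<nu> s y)"
  by (auto simp: prefix_def machine_out_append)

lemma concat_map_eq_machine_out:
  "concat (map (\<lambda>i. \<nu> (foldl \<delta> s (take i x)) (x ! i)) [0..<length x]) = machine_out \<delta> \<nu> s x"
proof (induction x arbitrary: s)
  case (Cons b x)
  have "[0..<length (b # x)] = 0 # map Suc [0..<length x]"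
    by (simp only: length_Cons upt_conv_Cons[OF zero_less_Suc] map_Suc_upt)
  then show ?case using Cons[of "\<delta> s b"] by (simp add: comp_def)
qed simp

lemma fst_out_eq_machine_out: "fst_out T x = machine_out (delta T) (nu T) (start T) x"
  using concat_map_eq_machine_out[of "nu T" "delta T" "start T" x]
  by (simp add: fst_out_def delta_hat_def)

lemma delta_hat_append: "delta_hat T (x @ y) = foldl (delta T) (delta_hat T x) y"
  by (simp add: delta_hat_def)

lemma fst_out_append:
  "fst_out T (x @ y) = fst_out T x @ machine_out (delta T) (nu T) (delta_hat T x) y"
  by (simp add: fst_out_eq_machine_out machine_out_append delta_hat_def)

lemma machine_out_length_le:
  assumes "\<And>s b. s \<in> F \<Longrightarrow> \<delta> s b \<in> F" "\<And>s b. s \<in> F \<Longrightarrow> length (\<nu> s b) \<le> L" "s \<in> F"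
  shows "length (machine_out \<delta> \<nu> s x) \<le> length x * L"
  using assms(3)
proof (induction x arbitrary: s)
  case (Cons b x)
  have "length (machine_out \<delta> \<nu> (\<delta> s b) x) \<le> length x * L"
    using Cons.IH assms(1) Cons.prems .
  then show ?case using assms(2)[OF Cons.prems, of b] by simp
qed simp

lemma machine_out_prefix_cut:
  assumes "prefix x (machine_out \<delta> \<nu> s p)"
  shows "x = [] \<or> (\<exists>p0 b u v. prefix (p0 @ [b]) p \<and> \<nu> (foldl \<delta> s p0) b = u @ v
           \<and> x = machine_out \<delta> \<nu> s p0 @ u)"
  using assms
proof (induction p rule: rev_induct)
  case (snoc b p)
  let ?q = "foldl \<delta> s p"
  have out: "machine_out \<delta> \<nu> s (p @ [b]) = machine_out \<delta> \<nu> s p @ \<nu> ?q b"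
    by (simp add: machine_out_append)
  show ?case
  proof (cases "prefix x (machine_out \<delta> \<nu> s p)")
    case True
    then show ?thesis using snoc.IH by (meson prefix_append prefix_order.trans)
  next
    case False
    then have "prefix (machine_out \<delta> \<nu> s p) x"
      using snoc.prems out prefix_same_cases[of x _ "machine_out \<delta> \<nu> s p"] by auto
    then obtain u where x: "x = machine_out \<delta> \<nu> s p @ u" by (auto simp: prefix_def)
    then obtain v where "\<nu> ?q b = u @ v" using snoc.prems out by (auto simp: prefix_def)
    then show ?thesis using x by blast
  qed
qed simp

section \<open>Realizing abstract machines by transducers\<close>

text \<open>Every entry of the transition table of an FST with \<open>N\<close> states and outputs of length at
  most \<open>L\<close> is encoded by at most \<open>2 N + 4 L + 4\<close> bits.\<close>
definition fst_size_bound :: "nat \<Rightarrow> nat \<Rightarrow> nat" where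
  "fst_size_bound N L = 2 * N + 2 + N * (2 * N + 4 * L + 4)"

lemma fst_size_bound_mono: "N \<le> N' \<Longrightarrow> L \<le> L' \<Longrightarrow> fst_size_bound N L \<le> fst_size_bound N' L'"
  unfolding fst_size_bound_def by (intro add_mono mult_mono) auto

lemma length_enc_nat [simp]: "length (enc_nat n) = n + 1"
  by (simp add: enc_nat_def)

lemma length_enc_bits [simp]: "length (enc_bits w) = 2 * length w + 1"
  by (induction w) (auto simp: enc_bits_def)

lemma length_enc_entry:
  "length (enc_entry (a, b, u, v)) = a + b + 2 * length u + 2 * length v + 4"
  by (simp add: enc_entry_def)

lemma fst_size_eq:
  "fst_size T = nstates T + start T + 2 + sum_list (map (\<lambda>e. length (enc_entry e)) (trans T))"
  by (simp add: fst_size_def sigma_def length_concat comp_def)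

lemma nstates_less_fst_size: "nstates T < fst_size T"
  by (simp add: fst_size_eq)

lemma length_nu_le_fst_size:
  assumes "wf_fst T" "q < nstates T"
  shows "length (nu T q b) \<le> fst_size T"
proof -
  obtain d0 d1 v0 v1 where e: "trans T ! q = (d0, d1, v0, v1)" by (cases "trans T ! q") auto
  have "length (enc_entry (trans T ! q)) \<le> sum_list (map (\<lambda>e. length (enc_entry e)) (trans T))"
    using assms by (intro member_le_sum_list) (auto simp: wf_fst_def)
  then show ?thesis using e by (auto simp: nu_def length_enc_entry fst_size_eq)
qed

lemma foldl_delta_less_nstates:
  "wf_fst T \<Longrightarrow> q < nstates T \<Longrightarrow> foldl (delta T) q x < nstates T"
  by (induction x arbitrary: q) (auto simp: wf_fst_def)

lemma delta_hat_less_nstates: "wf_fst T \<Longrightarrow> delta_hat T x < nstates T"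
  by (simp add: delta_hat_def foldl_delta_less_nstates wf_fst_def)

lemma length_fst_machine_out_le:
  "wf_fst T \<Longrightarrow> q < nstates T \<Longrightarrow> length (machine_out (delta T) (nu T) q x) \<le> length x * fst_size T"
  by (rule machine_out_length_le[of "{..<nstates T}"]) (auto simp: wf_fst_def length_nu_le_fst_size)

lemma fst_size_le_bound:
  assumes "start T < nstates T" "length (trans T) = nstates T"
    and "\<And>q b. q < nstates T \<Longrightarrow> delta T q b < nstates T"
    and "\<And>q b. q < nstates T \<Longrightarrow> length (nu T q b) \<le> L"
  shows "fst_size T \<le> fst_size_bound (nstates T) L"
proof -
  let ?N = "nstates T"
  have entry: "length (enc_entry (trans T ! q)) \<le> 2 * ?N + 4 * L + 4" if "q < ?N" for q
  proof -
    obtain d0 d1 v0 v1 where e: "trans T ! q = (d0, d1, v0, v1)" by (cases "trans T ! q") auto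
    have "d0 < ?N" "d1 < ?N" "length v0 \<le> L" "length v1 \<le> L"
      using assms(3,4)[OF that, of False] assms(3,4)[OF that, of True] e
      by (auto simp: delta_def nu_def)
    then show ?thesis by (simp add: e length_enc_entry)
  qed
  have "sum_list (map (\<lambda>e. length (enc_entry e)) (trans T))
      = (\<Sum>q<?N. length (enc_entry (trans T ! q)))"
    using assms(2) by (simp add: sum_list_sum_nth atLeast0LessThan)
  also have "\<dots> \<le> ?N * (2 * ?N + 4 * L + 4)"
    using sum_bounded_above[of "{..<?N}" _ "2 * ?N + 4 * L + 4"] entry by simp
  finally show ?thesis using assms(1) by (simp add: fst_size_eq fst_size_bound_def)
qed

lemma fst_of_enumerated_machine:
  assumes e: "bij_betw e {0..<n} R" and s0: "s0 \<in> R"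
    and closed: "\<And>s b. s \<in> R \<Longrightarrow> \<delta> s b \<in> R" and reach: "R \<subseteq> range (foldl \<delta> s0)"
    and out: "\<And>s b. s \<in> R \<Longrightarrow> length (\<nu> s b) \<le> L"
  shows "\<exists>T. wf_fst T \<and> fst_size T \<le> fst_size_bound n L \<and> (\<forall>x. fst_out T x = machine_out \<delta> \<nu> s0 x)"
proof -
  define idx where "idx = the_inv_into {0..<n} e"
  have idx: "idx s < n" "e (idx s) = s" if "s \<in> R" for s
    using that e unfolding idx_def
    by (metis atLeastLessThan_iff bij_betw_def the_inv_into_into subset_refl,
        metis f_the_inv_into_f_bij_betw)
  have e_idx: "idx (e i) = i" "e i \<in> R" if "i < n" for i
    using that e unfolding idx_def
    by (metis atLeastLessThan_iff bij_betw_def the_inv_into_f_f zero_le,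
        metis atLeastLessThan_iff bij_betwE zero_le)
  define T where "T = FST n (map (\<lambda>i. (idx (\<delta> (e i) False), idx (\<delta> (e i) True),
                                      \<nu> (e i) False, \<nu> (e i) True)) [0..<n]) (idx s0)"
  have delta_T: "delta T (idx s) b = idx (\<delta> s b)" and nu_T: "nu T (idx s) b = \<nu> s b"
    if "s \<in> R" for s b
    using idx[OF that] by (auto simp: T_def delta_def nu_def)
  have simulate: "foldl (delta T) (idx s) x = idx (foldl \<delta> s x)
      \<and> machine_out (delta T) (nu T) (idx s) x = machine_out \<delta> \<nu> s x" if "s \<in> R" for s x
    using that by (induction x arbitrary: s) (auto simp: delta_T nu_T closed)
  have wf_T: "wf_fst T"
    unfolding wf_fst_def
  proof (intro conjI allI impI)
    show "0 < nstates T" "start T < nstates T"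
      using idx[OF s0] by (auto simp: T_def)
    show "length (trans T) = nstates T" by (simp add: T_def)
  next
    fix q b assume "q < nstates T"
    then have q: "q < n" by (simp add: T_def)
    then have "delta T q b = idx (\<delta> (e q) b)" using delta_T[of "e q" b] e_idx[OF q] by simp
    then show "delta T q b < nstates T" using idx(1) closed e_idx(2)[OF q] by (simp add: T_def)
  next
    fix q assume "q < nstates T"
    then have q: "q < n" by (simp add: T_def)
    then obtain y where "e q = foldl \<delta> s0 y" using e_idx reach by blast
    then have "delta_hat T y = q"
      using simulate[OF s0, of y] e_idx[OF q] by (simp add: delta_hat_def T_def)
    then show "\<exists>x. delta_hat T x = q" by blast
  qed
  have "fst_size T \<le> fst_size_bound (nstates T) L"
  proof (rule fst_size_le_bound)
    show "start T < nstates T" "length (trans T) = nstates T"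
      using wf_T by (auto simp: wf_fst_def)
  next
    fix q b assume "q < nstates T"
    then have q: "q < n" by (simp add: T_def)
    then show "delta T q b < nstates T" "length (nu T q b) \<le> L"
      using delta_T[of "e q"] nu_T[of "e q"] e_idx[OF q] idx closed out by (auto simp: T_def)
  qed
  moreover have "fst_out T x = machine_out \<delta> \<nu> s0 x" for x
    using simulate[OF s0] by (simp add: fst_out_eq_machine_out T_def)
  ultimately show ?thesis using wf_T by (auto simp: T_def)
qed

lemma fst_of_machine:
  assumes "finite F" "s0 \<in> F" "\<And>s b. s \<in> F \<Longrightarrow> \<delta> s b \<in> F"
    and "\<And>s b. s \<in> F \<Longrightarrow> length (\<nu> s b) \<le> L"
  shows "\<exists>T. wf_fst T \<and> fst_size T \<le> fst_size_bound (card F) L \<and> (\<forall>x. fst_out T x = machine_out \<delta> \<nu> s0 x)"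
proof -
  define R where "R = range (foldl \<delta> s0)"
  have "foldl \<delta> s x \<in> F" if "s \<in> F" for s x
    using that by (induction x arbitrary: s) (use assms(3) in auto)
  then have RF: "R \<subseteq> F" using assms(2) by (auto simp: R_def)
  have "finite R" using RF assms(1) finite_subset by blast
  then obtain e where e: "bij_betw e {0..<card R} R"
    using ex_bij_betw_nat_finite by blast
  have s0: "s0 \<in> R" by (metis R_def foldl_Nil rangeI)
  have closed: "\<delta> s b \<in> R" if "s \<in> R" for s b
    using that by (auto simp: R_def) (metis foldl_Cons foldl_Nil foldl_append rangeI)
  have "\<exists>T. wf_fst T \<and> fst_size T \<le> fst_size_bound (card R) L
      \<and> (\<forall>x. fst_out T x = machine_out \<delta> \<nu> s0 x)"
    by (rule fst_of_enumerated_machine[OF e s0 closed]) (use RF assms(4) in \<open>auto simp: R_def\<close>)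
  then obtain T where T: "wf_fst T" "fst_size T \<le> fst_size_bound (card R) L"
    "\<forall>x. fst_out T x = machine_out \<delta> \<nu> s0 x"
    by blast
  moreover have "fst_size_bound (card R) L \<le> fst_size_bound (card F) L"
    using card_mono[OF assms(1) RF] by (intro fst_size_bound_mono) auto
  ultimately show ?thesis by (meson order_trans)
qed

section \<open>Composition and truncation\<close>

lemma FS_le_length:
  assumes "wf_fst C" "fst_size C \<le> k" "fst_out C p = x"
  shows "FS k x \<le> enat (length p)"
  unfolding FS_def using assms by (intro INF_lower) blast

lemma FS_attained:
  assumes "FS k x \<noteq> \<infinity>"
  obtains C p where "wf_fst C" "fst_size C \<le> k" "fst_out C p = x" "FS k x = enat (length p)"
proof -
  define P where "P = {p. \<exists>C. wf_fst C \<and> fst_size C \<le> k \<and> fst_out C p = x}"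
  have FS_eq: "FS k x = Inf ((\<lambda>p. enat (length p)) ` P)" by (simp add: FS_def P_def)
  then have "P \<noteq> {}" using assms by (auto simp: top_enat_def[symmetric])
  then obtain p0 where "p0 \<in> P" by blast
  then have "Inf ((\<lambda>p. enat (length p)) ` P) \<in> (\<lambda>p. enat (length p)) ` P"
    by (intro wellorder_InfI[of "enat (length p0)"]) auto
  then show ?thesis using that FS_eq by (auto simp: P_def)
qed

lemma fst_compose:
  assumes A: "wf_fst A" and T: "wf_fst T"
  shows "\<exists>C. wf_fst C \<and> fst_size C \<le> fst_size_bound (nstates A * nstates T) (fst_size A * fst_size T)
           \<and> (\<forall>p. fst_out C p = fst_out T (fst_out A p))"
proof -
  define \<delta> where "\<delta> = (\<lambda>(a, t) b. (delta A a b, foldl (delta T) t (nu A a b)))"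
  define \<nu> where "\<nu> = (\<lambda>(a, t) b. machine_out (delta T) (nu T) t (nu A a b))"
  define F where "F = {..<nstates A} \<times> {..<nstates T}"
  have closed: "\<delta> s b \<in> F" if "s \<in> F" for s b
    using that A T foldl_delta_less_nstates by (auto simp: F_def \<delta>_def wf_fst_def)
  have out: "length (\<nu> s b) \<le> fst_size A * fst_size T" if s: "s \<in> F" for s b
  proof -
    obtain a t where s: "s = (a, t)" "a < nstates A" "t < nstates T" using s by (auto simp: F_def)
    have "length (\<nu> s b) \<le> length (nu A a b) * fst_size T"
      using s length_fst_machine_out_le[OF T] by (simp add: \<nu>_def)
    also have "\<dots> \<le> fst_size A * fst_size T"
      using length_nu_le_fst_size[OF A s(2)] by simp
    finally show ?thesis .
  qed
  have "finite F" "(start A, start T) \<in> F" using A T by (auto simp: F_def wf_fst_def)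
  then obtain C where "wf_fst C" "fst_size C \<le> fst_size_bound (card F) (fst_size A * fst_size T)"
    "\<forall>x. fst_out C x = machine_out \<delta> \<nu> (start A, start T) x"
    using fst_of_machine[where \<delta> = \<delta> and \<nu> = \<nu>, OF _ _ closed out] by blast
  moreover have "machine_out \<delta> \<nu> (a, t) x = machine_out (delta T) (nu T) t (machine_out (delta A) (nu A) a x)"
    for a t x
    by (induction x arbitrary: a t) (auto simp: \<delta>_def \<nu>_def machine_out_append)
  moreover have "card F = nstates A * nstates T" by (simp add: F_def card_cartesian_product)
  ultimately show ?thesis by (auto simp: fst_out_eq_machine_out)
qed

text \<open>To cut the output \<open>u @ v\<close> of the transition \<open>(q, b)\<close> down to \<open>u\<close>, the machine
  withholds \<open>v\<close> and emits it only at the next step; a run ending with that transition thus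
  produces the original output minus \<open>v\<close>. The boolean component records a pending \<open>v\<close>.\<close>

definition withhold_delta :: "('s \<Rightarrow> bool \<Rightarrow> 's) \<Rightarrow> 's \<Rightarrow> bool \<Rightarrow> 's \<times> bool \<Rightarrow> bool \<Rightarrow> 's \<times> bool" where
  "withhold_delta \<delta> q b = (\<lambda>(s, _) c. (\<delta> s c, s = q \<and> c = b))"

definition withhold_nu ::
    "('s \<Rightarrow> bool \<Rightarrow> bool list) \<Rightarrow> 's \<Rightarrow> bool \<Rightarrow> bool list \<Rightarrow> bool list \<Rightarrow> 's \<times> bool \<Rightarrow> bool \<Rightarrow> bool list" where
  "withhold_nu \<nu> q b u v =
     (\<lambda>(s, pending) c. (if pending then v else []) @ (if s = q \<and> c = b then u else \<nu> s c))"

lemma fst_foldl_withhold_delta: "fst (foldl (withhold_delta \<delta> q b) (s, w) x) = foldl \<delta> s x"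
  by (induction x arbitrary: s w) (auto simp: withhold_delta_def)

lemma withhold_machine_out:
  assumes "\<nu> q b = u @ v"
  shows "machine_out (withhold_delta \<delta> q b) (withhold_nu \<nu> q b u v) (s, w) x
           @ (if snd (foldl (withhold_delta \<delta> q b) (s, w) x) then v else [])
         = (if w then v else []) @ machine_out \<delta> \<nu> s x"
proof (induction x arbitrary: s w)
  case (Cons c x)
  have "(if s = q \<and> c = b then u else \<nu> s c) @ (if s = q \<and> c = b then v else []) = \<nu> s c"
    using assms by auto
  then show ?case
    using Cons.IH[of "\<delta> s c" "s = q \<and> c = b"] by (simp add: withhold_delta_def withhold_nu_def)
qed simp

lemma fst_withhold:
  assumes C: "wf_fst C" and uv: "nu C (delta_hat C p0) b = u @ v"
  shows "\<exists>C'. wf_fst C' \<and> fst_size C' \<le> fst_size_bound (2 * nstates C) (2 * fst_size C)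
           \<and> fst_out C' (p0 @ [b]) = fst_out C p0 @ u"
proof -
  define q where "q = delta_hat C p0"
  define F where "F = {..<nstates C} \<times> (UNIV :: bool set)"
  have q: "q < nstates C" using delta_hat_less_nstates[OF C] by (simp add: q_def)
  have closed: "withhold_delta (delta C) q b s c \<in> F" if "s \<in> F" for s c
    using that C by (auto simp: F_def withhold_delta_def wf_fst_def)
  have out: "length (withhold_nu (nu C) q b u v s c) \<le> 2 * fst_size C" if s: "s \<in> F" for s c
  proof -
    obtain t w where t: "s = (t, w)" "t < nstates C" using s by (auto simp: F_def)
    have "length u \<le> fst_size C" "length v \<le> fst_size C"
      using length_nu_le_fst_size[OF C q, of b] uv by (auto simp: q_def)
    moreover have "length (nu C t c) \<le> fst_size C" using length_nu_le_fst_size[OF C t(2)] .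
    ultimately show ?thesis by (auto simp: withhold_nu_def t)
  qed
  have "finite F" "(start C, False) \<in> F" using C by (auto simp: F_def wf_fst_def)
  then obtain C' where C': "wf_fst C'" "fst_size C' \<le> fst_size_bound (card F) (2 * fst_size C)"
    "\<forall>y. fst_out C' y = machine_out (withhold_delta (delta C) q b) (withhold_nu (nu C) q b u v)
                            (start C, False) y"
    using fst_of_machine[where \<delta> = "withhold_delta (delta C) q b"
        and \<nu> = "withhold_nu (nu C) q b u v", OF _ _ closed out] by blast
  have uv': "nu C q b = u @ v" using uv by (simp add: q_def)
  have "snd (foldl (withhold_delta (delta C) q b) (start C, False) (p0 @ [b]))"
    using fst_foldl_withhold_delta[of "delta C" q b "start C" False p0]
    by (cases "foldl (withhold_delta (delta C) q b) (start C, False) p0")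
       (simp add: withhold_delta_def q_def delta_hat_def)
  then have "machine_out (withhold_delta (delta C) q b) (withhold_nu (nu C) q b u v) (start C, False)
      (p0 @ [b]) @ v = machine_out (delta C) (nu C) (start C) (p0 @ [b])"
    using withhold_machine_out[where \<nu> = "nu C", OF uv', of "delta C" "start C" False "p0 @ [b]"] by simp
  also have "\<dots> = fst_out C p0 @ u @ v"
    using uv' by (simp add: machine_out_append fst_out_eq_machine_out q_def delta_hat_def)
  finally have "fst_out C' (p0 @ [b]) = fst_out C p0 @ u" using C'(3) by simp
  moreover have "card F = 2 * nstates C" by (simp add: F_def card_cartesian_product)
  ultimately show ?thesis using C' by auto
qed

lemma fst_truncation:
  assumes C: "wf_fst C" "fst_size C \<le> k" and x: "prefix x (fst_out C p)"
  shows "\<exists>C' p'. wf_fst C' \<and> fst_size C' \<le> fst_size_bound (2 * k) (2 * k)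
           \<and> length p' \<le> length p \<and> fst_out C' p' = x"
proof -
  consider "x = []" | p0 b u v where "prefix (p0 @ [b]) p" "nu C (delta_hat C p0) b = u @ v"
    "x = fst_out C p0 @ u"
    using machine_out_prefix_cut[of x] x by (metis fst_out_eq_machine_out delta_hat_def)
  then show ?thesis
  proof cases
    case 1
    have "fst_size C \<le> fst_size_bound (2 * k) (2 * k)" using C(2) by (simp add: fst_size_bound_def)
    then show ?thesis using 1 C(1) by (intro exI[of _ C] exI[of _ "[]"]) (simp add: fst_out_def)
  next
    case (2 p0 b u v)
    then obtain C' where C': "wf_fst C'"
      "fst_size C' \<le> fst_size_bound (2 * nstates C) (2 * fst_size C)" "fst_out C' (p0 @ [b]) = x"
      using fst_withhold[OF C(1)] by blast
    have "fst_size_bound (2 * nstates C) (2 * fst_size C) \<le> fst_size_bound (2 * k) (2 * k)"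
      using C(2) nstates_less_fst_size[of C] by (intro fst_size_bound_mono) auto
    then have "fst_size C' \<le> fst_size_bound (2 * k) (2 * k)" using C'(2) by linarith
    moreover have "length (p0 @ [b]) \<le> length p" using 2(1) by (rule prefix_length_le)
    ultimately show ?thesis using C'(1,3) by blast
  qed
qed

definition image_prefix_size :: "fst \<Rightarrow> nat \<Rightarrow> nat" where
  "image_prefix_size T k =
     (let h = fst_size_bound (k * nstates T) (k * fst_size T) in fst_size_bound (2 * h) (2 * h))"

lemma FS_prefix_of_image_le:
  assumes T: "wf_fst T" and y: "prefix y (fst_out T x)"
  shows "FS (image_prefix_size T k) y \<le> FS k x"
proof (cases "FS k x = \<infinity>")
  case False
  then obtain A p where A: "wf_fst A" "fst_size A \<le> k" "fst_out A p = x" "FS k x = enat (length p)"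
    by (rule FS_attained)
  obtain C where C: "wf_fst C" "fst_size C \<le> fst_size_bound (nstates A * nstates T) (fst_size A * fst_size T)"
    "\<forall>p. fst_out C p = fst_out T (fst_out A p)"
    using fst_compose[OF A(1) T] by blast
  define h where "h = fst_size_bound (k * nstates T) (k * fst_size T)"
  have "fst_size_bound (nstates A * nstates T) (fst_size A * fst_size T) \<le> h"
    unfolding h_def using nstates_less_fst_size[of A] A(2)
    by (intro fst_size_bound_mono mult_right_mono) auto
  then have "fst_size C \<le> h" using C(2) by linarith
  moreover have "prefix y (fst_out C p)" using C(3) A(3) y by simp
  ultimately obtain C' p' where "wf_fst C'" "fst_size C' \<le> fst_size_bound (2 * h) (2 * h)"
    "length p' \<le> length p" "fst_out C' p' = y"
    using fst_truncation[OF C(1)] by blast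
  then have "FS (image_prefix_size T k) y \<le> enat (length p')"
    by (intro FS_le_length) (auto simp: image_prefix_size_def h_def Let_def)
  also have "\<dots> \<le> FS k x" using \<open>length p' \<le> length p\<close> A(4) by simp
  finally show ?thesis .
qed simp

section \<open>Information losslessness\<close>

lemma info_lossless_cancel:
  assumes IL: "info_lossless T"
    and "machine_out (delta T) (nu T) (delta_hat T z) u1 = machine_out (delta T) (nu T) (delta_hat T z) u2"
    and "foldl (delta T) (delta_hat T z) u1 = foldl (delta T) (delta_hat T z) u2"
  shows "u1 = u2"
proof -
  have "(fst_out T (z @ u1), delta_hat T (z @ u1)) = (fst_out T (z @ u2), delta_hat T (z @ u2))"
    using assms(2,3) by (simp add: fst_out_append delta_hat_append)
  then show ?thesis using IL unfolding info_lossless_def inj_def by blast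
qed

text \<open>Pigeonhole: two distinct prefixes of a longer silent run would reach the same state with
  the same (empty) output.\<close>
lemma info_lossless_silent_run_short:
  assumes IL: "info_lossless T" and T: "wf_fst T"
    and silent: "machine_out (delta T) (nu T) (delta_hat T z) u = []"
  shows "length u < nstates T"
proof (rule ccontr)
  assume long: "\<not> length u < nstates T"
  define g where "g i = foldl (delta T) (delta_hat T z) (take i u)" for i
  have img: "g ` {0..nstates T} \<subseteq> {..<nstates T}"
    using T foldl_delta_less_nstates delta_hat_less_nstates by (auto simp: g_def)
  have "\<not> inj_on g {0..nstates T}"
  proof
    assume "inj_on g {0..nstates T}"
    then have "card {0..nstates T} \<le> card {..<nstates T}"
      using card_inj_on_le[OF _ img] by simp
    then show False by simp
  qed
  then obtain i j where ij: "i \<le> nstates T" "j \<le> nstates T" "i \<noteq> j" "g i = g j"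
    unfolding inj_on_def by auto
  have silent_take: "machine_out (delta T) (nu T) (delta_hat T z) (take i u) = []" for i
    using silent machine_out_append[of "delta T" "nu T" "delta_hat T z" "take i u" "drop i u"] by simp
  have "take i u = take j u"
    using info_lossless_cancel[OF IL, of z "take i u" "take j u"] ij(4) silent_take
    by (simp add: g_def)
  moreover have "i \<le> length u" "j \<le> length u" using ij long by auto
  ultimately have "i = j" by (metis length_take min.absorb2)
  then show False using ij(3) by simp
qed

lemma machine_out_first_output:
  assumes "machine_out \<delta> \<nu> s u \<noteq> []"
  obtains u1 b u2 where "u = u1 @ b # u2" "machine_out \<delta> \<nu> s u1 = []" "\<nu> (foldl \<delta> s u1) b \<noteq> []"
  using assms
proof (induction u arbitrary: s thesis)
  case (Cons b u)
  show ?case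
  proof (cases "\<nu> s b = []")
    case True
    then have "machine_out \<delta> \<nu> (\<delta> s b) u \<noteq> []" using Cons.prems(2) by simp
    then obtain u1 c u2 where "u = u1 @ c # u2" "machine_out \<delta> \<nu> (\<delta> s b) u1 = []"
      "\<nu> (foldl \<delta> (\<delta> s b) u1) c \<noteq> []"
      using Cons.IH[of "\<delta> s b"] by blast
    then show ?thesis using Cons.prems(1)[of "b # u1" c u2] True by simp
  qed (use Cons.prems(1)[of "[]" b u] in simp)
qed simp

lemma info_lossless_length_less:
  assumes IL: "info_lossless T" and T: "wf_fst T"
  shows "length u < nstates T * (length (machine_out (delta T) (nu T) (delta_hat T z) u) + 1)"
proof (induction "length u" arbitrary: u z rule: less_induct)
  case less
  let ?out = "machine_out (delta T) (nu T)"
  show ?case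
  proof (cases "?out (delta_hat T z) u = []")
    case True
    then show ?thesis using info_lossless_silent_run_short[OF IL T] by simp
  next
    case False
    then obtain u1 b u2 where u: "u = u1 @ b # u2" and silent: "?out (delta_hat T z) u1 = []"
      and loud: "nu T (delta_hat T (z @ u1)) b \<noteq> []"
      by (rule machine_out_first_output) (simp add: delta_hat_append)
    define N where "N = nstates T"
    define o2 where "o2 = length (?out (delta_hat T (z @ u1 @ [b])) u2)"
    have "length u1 < N" using info_lossless_silent_run_short[OF IL T silent] by (simp add: N_def)
    moreover have "length u2 < N * (o2 + 1)" using less u by (simp add: N_def o2_def)
    moreover have "o2 + 1 \<le> length (?out (delta_hat T z) u)"
      using u silent loud by (simp add: o2_def machine_out_append delta_hat_append Suc_le_eq)
    then have "N * (o2 + 1) + N \<le> N * (length (?out (delta_hat T z) u) + 1)"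
      by (metis add_mult_distrib2 mult.right_neutral mult_le_mono2 add_le_mono1)
    ultimately have "length u < N * (length (?out (delta_hat T z) u) + 1)" using u by simp
    then show ?thesis by (simp add: N_def)
  qed
qed

definition block_preimage :: "fst \<Rightarrow> nat \<Rightarrow> nat \<Rightarrow> bool list \<Rightarrow> nat \<Rightarrow> bool list" where
  "block_preimage T bound q z q' =
     (if \<exists>u. length u \<le> bound \<and> machine_out (delta T) (nu T) q u = z \<and> foldl (delta T) q u = q'
      then SOME u. length u \<le> bound \<and> machine_out (delta T) (nu T) q u = z \<and> foldl (delta T) q u = q'
      else [])"

lemma length_block_preimage_le: "length (block_preimage T bound q z q') \<le> bound"
  unfolding block_preimage_def by (auto intro: someI2_ex)

lemma block_preimage_eq:
  assumes IL: "info_lossless T" and "length u \<le> bound"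
  shows "block_preimage T bound (delta_hat T z) (machine_out (delta T) (nu T) (delta_hat T z) u)
           (foldl (delta T) (delta_hat T z) u) = u"
proof -
  let ?P = "\<lambda>u'. length u' \<le> bound
     \<and> machine_out (delta T) (nu T) (delta_hat T z) u' = machine_out (delta T) (nu T) (delta_hat T z) u
     \<and> foldl (delta T) (delta_hat T z) u' = foldl (delta T) (delta_hat T z) u"
  have ex: "\<exists>u'. ?P u'" using assms(2) by blast
  then have "(SOME u'. ?P u') = u" using someI_ex[OF ex] info_lossless_cancel[OF IL] by blast
  then show ?thesis using ex by (simp add: block_preimage_def)
qed

section \<open>Prefixes of the image sequence\<close>

lemma take_seq_prefix: "L \<le> M \<Longrightarrow> take L (seq_prefix S M) = seq_prefix S L"
  by (simp add: seq_prefix_def take_map)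

lemma prefix_seq_prefix:
  assumes "prefix ys (seq_prefix S M)"
  shows "ys = seq_prefix S (length ys)"
proof -
  have "length ys \<le> M" using prefix_length_le[OF assms] by (simp add: seq_prefix_def)
  moreover have "ys = take (length ys) (seq_prefix S M)"
    using assms by (metis append_eq_conv_conj prefix_def)
  ultimately show ?thesis by (simp add: take_seq_prefix)
qed

locale ilfs_image =
  fixes T :: fst and S S' :: "nat \<Rightarrow> bool"
  assumes T: "wf_fst T" and IL: "info_lossless T"
    and image_prefix:
      "\<And>n. fst_out T (seq_prefix S n) = seq_prefix S' (length (fst_out T (seq_prefix S n)))"
    and image_unbounded: "\<And>M. \<exists>n. M \<le> length (fst_out T (seq_prefix S n))"
begin

abbreviation image_len :: "nat \<Rightarrow> nat" where
  "image_len n \<equiv> length (fst_out T (seq_prefix S n))"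

definition segment :: "nat \<Rightarrow> nat \<Rightarrow> bool list" where
  "segment j j' = map S [j..<j']"

lemma length_segment [simp]: "length (segment j j') = j' - j"
  by (simp add: segment_def)

lemma segment_append: "j \<le> j' \<Longrightarrow> j' \<le> n \<Longrightarrow> segment j n = segment j j' @ segment j' n"
  using upt_add_eq_append[of j j' "n - j'"] by (simp add: segment_def)

lemma seq_prefix_append_segment: "j \<le> j' \<Longrightarrow> seq_prefix S j' = seq_prefix S j @ segment j j'"
  using upt_add_eq_append[of 0 j "j' - j"] by (simp add: seq_prefix_def segment_def)

lemma fst_out_seq_prefix_split:
  "j \<le> j' \<Longrightarrow> fst_out T (seq_prefix S j')
     = fst_out T (seq_prefix S j) @ machine_out (delta T) (nu T) (delta_hat T (seq_prefix S j)) (segment j j')"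
  by (simp add: seq_prefix_append_segment fst_out_append)

lemma image_len_mono: "j \<le> j' \<Longrightarrow> image_len j \<le> image_len j'"
  by (simp add: fst_out_seq_prefix_split)

lemma image_len_Suc_le: "image_len (Suc j) \<le> image_len j + fst_size T"
proof -
  have "segment j (Suc j) = [S j]" by (simp add: segment_def)
  then show ?thesis
    using fst_out_seq_prefix_split[of j "Suc j"] length_nu_le_fst_size[OF T delta_hat_less_nstates[OF T]]
    by simp
qed

lemma image_len_le: "image_len n \<le> n * fst_size T"
  using length_fst_machine_out_le[OF T, of "start T" "seq_prefix S n"] T
  by (simp add: fst_out_eq_machine_out seq_prefix_def wf_fst_def)

lemma length_segment_less: "j \<le> j' \<Longrightarrow> j' - j < nstates T * (image_len j' - image_len j + 1)"
  using info_lossless_length_less[OF IL T, of "segment j j'" "seq_prefix S j"]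
  by (simp add: fst_out_seq_prefix_split)

lemma index_less_image_len: "j < nstates T * (image_len j + 1)"
  using info_lossless_length_less[OF IL T, of "seq_prefix S j" "[]"]
  by (simp add: fst_out_eq_machine_out seq_prefix_def delta_hat_def)

lemma next_block:
  assumes "0 < c"
  obtains j' where "j < j'" "image_len j + c \<le> image_len j'"
    "image_len j' < image_len j + c + fst_size T"
proof -
  have ex: "\<exists>j'. image_len j + c \<le> image_len j'" using image_unbounded by blast
  define j' where "j' = (LEAST j'. image_len j + c \<le> image_len j')"
  have long: "image_len j + c \<le> image_len j'" unfolding j'_def using LeastI_ex[OF ex] .
  have "j < j'"
  proof (rule ccontr)
    assume "\<not> j < j'"
    then have "image_len j' \<le> image_len j" by (simp add: image_len_mono)
    then show False using long assms by simp
  qed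
  then have "\<not> image_len j + c \<le> image_len (j' - 1)"
    unfolding j'_def by (intro not_less_Least) (simp_all add: j'_def)
  moreover have "image_len j' \<le> image_len (j' - 1) + fst_size T"
    using image_len_Suc_le[of "j' - 1"] \<open>j < j'\<close> by simp
  ultimately show ?thesis using that \<open>j < j'\<close> long by simp
qed

lemma covering_index:
  assumes "j \<le> j'" "image_len j \<le> m" "m \<le> image_len j'"
  obtains n where "j \<le> n" "n \<le> j'" "m \<le> image_len n" "n \<le> nstates T * (m + 1)"
proof -
  define n where "n = (LEAST n. j \<le> n \<and> m \<le> image_len n)"
  have "j \<le> n \<and> m \<le> image_len n" unfolding n_def by (rule LeastI[of _ j']) (use assms in simp)
  then have n: "j \<le> n" "m \<le> image_len n" by auto
  have "n \<le> j'" unfolding n_def using assms by (intro Least_le) simp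
  moreover have "n \<le> nstates T * (m + 1)"
  proof (cases "n = j")
    case True
    have "nstates T * (image_len j + 1) \<le> nstates T * (m + 1)" using assms(2) by simp
    then show ?thesis using index_less_image_len[of j] True by linarith
  next
    case False
    then have "\<not> (j \<le> n - 1 \<and> m \<le> image_len (n - 1))"
      unfolding n_def by (intro not_less_Least) (use n n_def in simp)
    then have "image_len (n - 1) + 1 \<le> m" using n False by linarith
    then have "nstates T * (image_len (n - 1) + 1) \<le> nstates T * m" by (rule mult_le_mono2)
    then have "n - 1 < nstates T * m" using index_less_image_len[of "n - 1"] by linarith
    then show ?thesis by (simp add: algebra_simps)
  qed
  ultimately show ?thesis using that n by blast
qed

lemma FS_image_le:
  "m \<le> image_len n \<Longrightarrow> FS (image_prefix_size T k) (seq_prefix S' m) \<le> FS k (seq_prefix S n)"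
  using FS_prefix_of_image_le[OF T] image_prefix[of n] take_seq_prefix[of m]
  by (metis take_is_prefix)

end

section \<open>The decoder\<close>

text \<open>The decoder runs a compressor \<open>B\<close> of the image sequence and inverts \<open>T\<close> block by block.
  Its input is a sequence of rounds: a bit \<open>True\<close>, an offset and a state of \<open>T\<close>, both in unary
  and terminated by \<open>False\<close>, and then the program bits for \<open>B\<close> until \<open>B\<close> has produced the next
  block of \<open>c\<close> plus offset bits of \<open>T\<close>'s output, which is then replaced by its unique preimage
  ending in the given state. A final \<open>False\<close> switches to copying the remaining input. The
  state of the decoder is the state of \<open>B\<close>, the state of \<open>T\<close> at the start of the current block,
  and a mode holding the output of \<open>B\<close> not yet decoded.\<close>

datatype dec_mode =
  Ready "bool list"
| Read_offset nat "bool list"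
| Read_state nat nat "bool list"
| Simulate nat nat "bool list"
| Literal

definition block_bound :: "fst \<Rightarrow> nat \<Rightarrow> nat" where
  "block_bound T c = nstates T * (c + fst_size T + 1)"

text \<open>The unary counters saturate so that the state set stays finite.\<close>
fun dec_step :: "fst \<Rightarrow> fst \<Rightarrow> nat \<Rightarrow> nat \<times> nat \<times> dec_mode \<Rightarrow> bool \<Rightarrow> (nat \<times> nat \<times> dec_mode) \<times> bool list"
  where
    "dec_step B T c (s, q, Ready buf) b =
      (if b then ((s, q, Read_offset 0 buf), []) else ((s, q, Literal), []))"
  | "dec_step B T c (s, q, Read_offset k buf) b =
      (if b then ((s, q, Read_offset (min (k + 1) (fst_size T - 1)) buf), [])
       else ((s, q, Read_state k 0 buf), []))"
  | "dec_step B T c (s, q, Read_state off k buf) b =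
      (if b then ((s, q, Read_state off (min (k + 1) (nstates T - 1)) buf), [])
       else ((s, q, Simulate (c + off) k buf), []))"
  | "dec_step B T c (s, q, Simulate l q' buf) b =
      (let buf' = buf @ nu B s b in
       if l \<le> length buf'
       then ((delta B s b, q', Ready (drop l buf')), block_preimage T (block_bound T c) q (take l buf') q')
       else ((delta B s b, q, Simulate l q' buf'), []))"
  | "dec_step B T c (s, q, Literal) b = ((s, q, Literal), [b])"

definition dec_delta :: "fst \<Rightarrow> fst \<Rightarrow> nat \<Rightarrow> nat \<times> nat \<times> dec_mode \<Rightarrow> bool \<Rightarrow> nat \<times> nat \<times> dec_mode" where
  "dec_delta B T c x b = fst (dec_step B T c x b)"

definition dec_nu :: "fst \<Rightarrow> fst \<Rightarrow> nat \<Rightarrow> nat \<times> nat \<times> dec_mode \<Rightarrow> bool \<Rightarrow> bool list" where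
  "dec_nu B T c x b = snd (dec_step B T c x b)"

lemma dec_delta_simps [simp]:
  "dec_delta B T c (s, q, Ready buf) b = (if b then (s, q, Read_offset 0 buf) else (s, q, Literal))"
  "dec_delta B T c (s, q, Read_offset k buf) b =
     (if b then (s, q, Read_offset (min (k + 1) (fst_size T - 1)) buf) else (s, q, Read_state k 0 buf))"
  "dec_delta B T c (s, q, Read_state off k buf) b =
     (if b then (s, q, Read_state off (min (k + 1) (nstates T - 1)) buf)
      else (s, q, Simulate (c + off) k buf))"
  "dec_delta B T c (s, q, Simulate l q' buf) b =
     (if l \<le> length (buf @ nu B s b) then (delta B s b, q', Ready (drop l (buf @ nu B s b)))
      else (delta B s b, q, Simulate l q' (buf @ nu B s b)))"
  "dec_delta B T c (s, q, Literal) b = (s, q, Literal)"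
  by (simp_all add: dec_delta_def Let_def)

lemma dec_nu_simps [simp]:
  "dec_nu B T c (s, q, Ready buf) b = []"
  "dec_nu B T c (s, q, Read_offset k buf) b = []"
  "dec_nu B T c (s, q, Read_state off k buf) b = []"
  "dec_nu B T c (s, q, Simulate l q' buf) b =
     (if l \<le> length (buf @ nu B s b)
      then block_preimage T (block_bound T c) q (take l (buf @ nu B s b)) q' else [])"
  "dec_nu B T c (s, q, Literal) b = [b]"
  by (simp_all add: dec_nu_def Let_def)

definition advice :: "nat \<Rightarrow> nat \<Rightarrow> bool list" where
  "advice off q' = True # replicate off True @ False # replicate q' True @ [False]"

lemma length_advice: "length (advice off q') = off + q' + 3"
  by (simp add: advice_def)

lemma dec_literal: "machine_out (dec_delta B T c) (dec_nu B T c) (s, q, Literal) w = w"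
  by (induction w) auto

lemma dec_count_offset:
  "k + i < fst_size T \<Longrightarrow>
     foldl (dec_delta B T c) (s, q, Read_offset k buf) (replicate i True) = (s, q, Read_offset (k + i) buf)
     \<and> machine_out (dec_delta B T c) (dec_nu B T c) (s, q, Read_offset k buf) (replicate i True) = []"
  by (induction i arbitrary: k) auto

lemma dec_count_state:
  "k + i < nstates T \<Longrightarrow>
     foldl (dec_delta B T c) (s, q, Read_state off k buf) (replicate i True) = (s, q, Read_state off (k + i) buf)
     \<and> machine_out (dec_delta B T c) (dec_nu B T c) (s, q, Read_state off k buf) (replicate i True) = []"
  by (induction i arbitrary: k) auto

lemma dec_read_advice:
  assumes "off < fst_size T" "q' < nstates T"
  shows "foldl (dec_delta B T c) (s, q, Ready buf) (advice off q') = (s, q, Simulate (c + off) q' buf)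
    \<and> machine_out (dec_delta B T c) (dec_nu B T c) (s, q, Ready buf) (advice off q') = []"
  using dec_count_offset[of 0 off T B c s q buf] dec_count_state[of 0 q' T B c s q off buf] assms
  by (simp add: advice_def machine_out_append)

lemma dec_simulate:
  assumes B: "wf_fst B" "s < nstates B"
    and "length buf < l" "l \<le> length (buf @ machine_out (delta B) (nu B) s \<rho>)"
  shows "\<exists>\<sigma>. prefix \<sigma> \<rho> \<and> l \<le> length (buf @ machine_out (delta B) (nu B) s \<sigma>)
    \<and> foldl (dec_delta B T c) (s, q, Simulate l q' buf) \<sigma>
        = (foldl (delta B) s \<sigma>, q', Ready (drop l (buf @ machine_out (delta B) (nu B) s \<sigma>)))
    \<and> machine_out (dec_delta B T c) (dec_nu B T c) (s, q, Simulate l q' buf) \<sigma>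
        = block_preimage T (block_bound T c) q (take l (buf @ machine_out (delta B) (nu B) s \<sigma>)) q'
    \<and> length (drop l (buf @ machine_out (delta B) (nu B) s \<sigma>)) < fst_size B"
  using assms(2-)
proof (induction \<rho> arbitrary: s buf)
  case (Cons b \<rho>)
  define buf' where "buf' = buf @ nu B s b"
  show ?case
  proof (cases "l \<le> length buf'")
    case True
    have "length (nu B s b) \<le> fst_size B" using length_nu_le_fst_size[OF B(1) Cons.prems(1)] .
    then show ?thesis using True Cons.prems(2) nstates_less_fst_size[of B]
      by (intro exI[of _ "[b]"]) (auto simp: buf'_def)
  next
    case False
    have "delta B s b < nstates B" using B(1) Cons.prems(1) by (simp add: wf_fst_def)
    moreover have "l \<le> length (buf' @ machine_out (delta B) (nu B) (delta B s b) \<rho>)"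
      using Cons.prems(3) by (simp add: buf'_def)
    ultimately obtain \<sigma> where "prefix \<sigma> \<rho>" and \<sigma>:
      "l \<le> length (buf' @ machine_out (delta B) (nu B) (delta B s b) \<sigma>)
       \<and> foldl (dec_delta B T c) (delta B s b, q, Simulate l q' buf') \<sigma>
          = (foldl (delta B) (delta B s b) \<sigma>, q',
             Ready (drop l (buf' @ machine_out (delta B) (nu B) (delta B s b) \<sigma>)))
       \<and> machine_out (dec_delta B T c) (dec_nu B T c) (delta B s b, q, Simulate l q' buf') \<sigma>
          = block_preimage T (block_bound T c) q (take l (buf' @ machine_out (delta B) (nu B) (delta B s b) \<sigma>)) q'
       \<and> length (drop l (buf' @ machine_out (delta B) (nu B) (delta B s b) \<sigma>)) < fst_size B"
      using Cons.IH False by (meson not_le)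
    then show ?thesis using False
      by (intro exI[of _ "b # \<sigma>"]) (simp add: buf'_def)
  qed
qed simp

lemma finite_bool_lists_le: "finite {xs :: bool list. length xs \<le> N}"
  using finite_lists_length_le[of "UNIV :: bool set" N] by simp

definition dec_modes :: "fst \<Rightarrow> nat \<Rightarrow> dec_mode set" where
  "dec_modes T c =
    (let bufs = {buf. length buf \<le> c + fst_size T} in
     Ready ` bufs
     \<union> (\<lambda>(k, buf). Read_offset k buf) ` ({..<fst_size T} \<times> bufs)
     \<union> (\<lambda>(off, k, buf). Read_state off k buf) ` ({..<fst_size T} \<times> {..<nstates T} \<times> bufs)
     \<union> (\<lambda>(l, q', buf). Simulate l q' buf) ` ({c..<c + fst_size T} \<times> {..<nstates T} \<times> bufs)
     \<union> {Literal})"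

lemma finite_dec_modes: "finite (dec_modes T c)"
  by (simp add: dec_modes_def finite_bool_lists_le Let_def)

lemma dec_delta_closed:
  assumes B: "wf_fst B" and T: "wf_fst T" and "fst_size B \<le> c"
    and x: "x \<in> {..<nstates B} \<times> {..<nstates T} \<times> dec_modes T c"
  shows "dec_delta B T c x b \<in> {..<nstates B} \<times> {..<nstates T} \<times> dec_modes T c"
proof -
  obtain s q md where x: "x = (s, q, md)" "s < nstates B" "q < nstates T" "md \<in> dec_modes T c"
    using x by auto
  have "delta B s b < nstates B" using B x(2) by (simp add: wf_fst_def)
  moreover have "length (nu B s b) \<le> c" using length_nu_le_fst_size[OF B x(2), of b] assms(3) by simp
  moreover have "0 < fst_size T" "0 < nstates T" using T nstates_less_fst_size[of T] by (auto simp: wf_fst_def)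
  ultimately show ?thesis using x(2-4)
    by (cases md) (auto simp: x(1) dec_modes_def Let_def image_iff)
qed

lemma length_dec_nu_le: "length (dec_nu B T c x b) \<le> block_bound T c + 1"
  by (cases "(B, T, c, x, b)" rule: dec_step.cases)
    (auto simp: le_SucI length_block_preimage_le)

definition decoder_size :: "fst \<Rightarrow> nat \<Rightarrow> nat \<Rightarrow> nat" where
  "decoder_size T c K = fst_size_bound (K * nstates T * card (dec_modes T c)) (block_bound T c + 1)"

lemma decoder_fst:
  assumes B: "wf_fst B" and T: "wf_fst T" and "fst_size B \<le> c" "fst_size B \<le> K"
  shows "\<exists>E. wf_fst E \<and> fst_size E \<le> decoder_size T c K
    \<and> (\<forall>x. fst_out E x = machine_out (dec_delta B T c) (dec_nu B T c) (start B, start T, Ready []) x)"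
proof -
  define F where "F = {..<nstates B} \<times> {..<nstates T} \<times> dec_modes T c"
  have "finite F" by (simp add: F_def finite_dec_modes)
  moreover have "(start B, start T, Ready []) \<in> F"
    using B T by (auto simp: F_def dec_modes_def wf_fst_def Let_def)
  moreover have "dec_delta B T c x b \<in> F" if "x \<in> F" for x b
    using dec_delta_closed[OF assms(1-3)] that by (simp add: F_def)
  ultimately obtain E where E: "wf_fst E" "fst_size E \<le> fst_size_bound (card F) (block_bound T c + 1)"
    "\<forall>x. fst_out E x = machine_out (dec_delta B T c) (dec_nu B T c) (start B, start T, Ready []) x"
    using fst_of_machine[where \<delta> = "dec_delta B T c" and \<nu> = "dec_nu B T c"] length_dec_nu_le
    by metis
  have "card F \<le> K * nstates T * card (dec_modes T c)"
    using nstates_less_fst_size[of B] assms(4) by (simp add: F_def card_cartesian_product)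
  then have "fst_size_bound (card F) (block_bound T c + 1) \<le> decoder_size T c K"
    unfolding decoder_size_def by (intro fst_size_bound_mono) auto
  then show ?thesis using E by (meson order_trans)
qed

definition advice_cost :: "fst \<Rightarrow> nat" where
  "advice_cost T = fst_size T + nstates T + 3"

definition tail_cost :: "fst \<Rightarrow> nat \<Rightarrow> nat" where
  "tail_cost T c = nstates T * (c + fst_size T) + 1"

locale decoding = ilfs_image +
  fixes B :: fst and c m :: nat and p :: "bool list"
  assumes B: "wf_fst B" and program: "fst_out B p = seq_prefix S' m" and B_size: "fst_size B \<le> c"
begin

abbreviation dec_out :: "nat \<times> nat \<times> dec_mode \<Rightarrow> bool list \<Rightarrow> bool list" where
  "dec_out \<equiv> machine_out (dec_delta B T c) (dec_nu B T c)"

abbreviation dec_run :: "nat \<times> nat \<times> dec_mode \<Rightarrow> bool list \<Rightarrow> nat \<times> nat \<times> dec_mode" where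
  "dec_run \<equiv> foldl (dec_delta B T c)"

definition round_inv :: "nat \<Rightarrow> bool list \<Rightarrow> bool list \<Rightarrow> bool" where
  "round_inv j \<pi> buf \<longleftrightarrow> prefix \<pi> p \<and> fst_out B \<pi> = fst_out T (seq_prefix S j) @ buf
     \<and> length buf < c \<and> image_len j \<le> m"

definition config :: "nat \<Rightarrow> bool list \<Rightarrow> bool list \<Rightarrow> nat \<times> nat \<times> dec_mode" where
  "config j \<pi> buf = (delta_hat B \<pi>, delta_hat T (seq_prefix S j), Ready buf)"

lemma c_pos: "0 < c"
  using B_size nstates_less_fst_size[of B] by simp

lemma program_prefix_image:
  assumes "prefix \<pi> p" "image_len j \<le> length (fst_out B \<pi>)"
  shows "take (image_len j) (fst_out B \<pi>) = fst_out T (seq_prefix S j)"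
proof -
  have "prefix (fst_out B \<pi>) (seq_prefix S' m)"
    using prefix_machine_out[OF assms(1), of "delta B" "nu B" "start B"] program
    by (simp add: fst_out_eq_machine_out)
  then have "fst_out B \<pi> = seq_prefix S' (length (fst_out B \<pi>))" by (rule prefix_seq_prefix)
  then have "take (image_len j) (fst_out B \<pi>) = seq_prefix S' (image_len j)"
    using assms(2) by (metis take_seq_prefix)
  then show ?thesis using image_prefix[of j] by simp
qed

lemma decode_block:
  assumes inv: "round_inv j \<pi> buf" and "j \<le> j'"
    and long: "image_len j + c \<le> image_len j'" and short: "image_len j' < image_len j + c + fst_size T"
    and "image_len j' \<le> m"
  defines "start_block \<equiv> (delta_hat B \<pi>, delta_hat T (seq_prefix S j),
     Simulate (image_len j' - image_len j) (delta_hat T (seq_prefix S j')) buf)"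
  shows "\<exists>\<sigma> buf'. dec_run start_block \<sigma> = config j' (\<pi> @ \<sigma>) buf'
     \<and> dec_out start_block \<sigma> = segment j j' \<and> round_inv j' (\<pi> @ \<sigma>) buf'"
proof -
  define l where "l = image_len j' - image_len j"
  define q where "q = delta_hat T (seq_prefix S j)"
  define q' where "q' = delta_hat T (seq_prefix S j')"
  define s where "s = delta_hat B \<pi>"
  let ?out_B = "machine_out (delta B) (nu B) s"
  obtain \<rho> where p: "p = \<pi> @ \<rho>" using inv by (auto simp: round_inv_def prefix_def)
  have buf: "length buf < l" using inv long by (auto simp: round_inv_def l_def)
  have out_\<pi>: "fst_out B \<pi> = fst_out T (seq_prefix S j) @ buf" using inv by (simp add: round_inv_def)
  then have "fst_out B p = fst_out T (seq_prefix S j) @ buf @ ?out_B \<rho>"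
    by (simp add: p fst_out_append s_def)
  moreover have "length (fst_out B p) = m" using program by (simp add: seq_prefix_def)
  ultimately have "l \<le> length (buf @ ?out_B \<rho>)" using \<open>image_len j' \<le> m\<close> by (simp add: l_def)
  then obtain \<sigma> where "prefix \<sigma> \<rho>" and \<sigma>: "l \<le> length (buf @ ?out_B \<sigma>)"
      "dec_run (s, q, Simulate l q' buf) \<sigma> = (foldl (delta B) s \<sigma>, q', Ready (drop l (buf @ ?out_B \<sigma>)))"
      "dec_out (s, q, Simulate l q' buf) \<sigma>
         = block_preimage T (block_bound T c) q (take l (buf @ ?out_B \<sigma>)) q'"
      "length (drop l (buf @ ?out_B \<sigma>)) < fst_size B"
    using dec_simulate[OF B delta_hat_less_nstates[OF B] buf, where \<rho> = \<rho> and T = T and c = c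
        and q = q and q' = q'] unfolding s_def by blast
  define z where "z = buf @ ?out_B \<sigma>"
  have prefix: "prefix (\<pi> @ \<sigma>) p" using p \<open>prefix \<sigma> \<rho>\<close> by simp
  have out_B: "fst_out B (\<pi> @ \<sigma>) = fst_out T (seq_prefix S j) @ z"
    using out_\<pi> by (simp add: fst_out_append z_def s_def)
  have "fst_out T (seq_prefix S j) @ take l z = fst_out T (seq_prefix S j')"
    using program_prefix_image[OF prefix, of j'] out_B \<sigma>(1) image_len_mono[OF \<open>j \<le> j'\<close>]
    by (simp add: z_def l_def)
  then have block: "take l z = machine_out (delta T) (nu T) q (segment j j')"
    using fst_out_seq_prefix_split[OF \<open>j \<le> j'\<close>] by (simp add: q_def)
  have "j' - j < nstates T * (l + 1)" using length_segment_less[OF \<open>j \<le> j'\<close>] by (simp add: l_def)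
  also have "\<dots> \<le> nstates T * (c + fst_size T + 1)" using short by (intro mult_le_mono2) (simp add: l_def)
  finally have "length (segment j j') \<le> block_bound T c" by (simp add: block_bound_def)
  then have "block_preimage T (block_bound T c) q (take l z) q' = segment j j'"
    using block_preimage_eq[OF IL, of "segment j j'" _ "seq_prefix S j"] block
    by (simp add: q_def q'_def seq_prefix_append_segment[OF \<open>j \<le> j'\<close>] delta_hat_append)
  moreover have "fst_out B (\<pi> @ \<sigma>) = fst_out T (seq_prefix S j') @ drop l z"
    using out_B block fst_out_seq_prefix_split[OF \<open>j \<le> j'\<close>]
    by (metis append_assoc append_take_drop_id q_def)
  then have "round_inv j' (\<pi> @ \<sigma>) (drop l z)"
    using prefix \<sigma>(4) B_size \<open>image_len j' \<le> m\<close> by (simp add: round_inv_def z_def)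
  ultimately show ?thesis using \<sigma>(2,3)
    by (auto simp: start_block_def config_def s_def q_def q'_def l_def z_def delta_hat_append)
qed

lemma decode_round:
  assumes inv: "round_inv j \<pi> buf" and "j \<le> j'"
    and long: "image_len j + c \<le> image_len j'" and short: "image_len j' < image_len j + c + fst_size T"
    and "image_len j' \<le> m"
  defines "A \<equiv> advice (image_len j' - image_len j - c) (delta_hat T (seq_prefix S j'))"
  shows "\<exists>\<sigma> buf'. dec_run (config j \<pi> buf) (A @ \<sigma>) = config j' (\<pi> @ \<sigma>) buf'
     \<and> dec_out (config j \<pi> buf) (A @ \<sigma>) = segment j j' \<and> round_inv j' (\<pi> @ \<sigma>) buf'"
proof -
  have "dec_run (config j \<pi> buf) A = (delta_hat B \<pi>, delta_hat T (seq_prefix S j),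
      Simulate (image_len j' - image_len j) (delta_hat T (seq_prefix S j')) buf)
    \<and> dec_out (config j \<pi> buf) A = []"
    using dec_read_advice[OF _ delta_hat_less_nstates[OF T]] long short
    by (simp add: A_def config_def)
  then show ?thesis using decode_block[OF assms(1-5)] by (simp add: machine_out_append)
qed

lemma decode_tail:
  assumes inv: "round_inv j \<pi> buf" and "j \<le> j'"
    and short: "image_len j' < image_len j + c + fst_size T" and "m < image_len j'"
  shows "\<exists>\<rho> n. dec_out (config j \<pi> buf) \<rho> = segment j n \<and> j \<le> n \<and> m \<le> image_len n
     \<and> n \<le> nstates T * (m + 1) \<and> length \<rho> \<le> tail_cost T c"
proof -
  have "image_len j \<le> m" using inv by (simp add: round_inv_def)
  then obtain n where n: "j \<le> n" "n \<le> j'" "m \<le> image_len n" "n \<le> nstates T * (m + 1)"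
    using covering_index[OF \<open>j \<le> j'\<close> _ less_imp_le[OF \<open>m < image_len j'\<close>]] by blast
  have "dec_out (config j \<pi> buf) (False # segment j n) = segment j n"
    by (simp add: config_def dec_literal)
  moreover have "n - j \<le> j' - j" using n by simp
  moreover have "j' - j < nstates T * (image_len j' - image_len j + 1)"
    by (rule length_segment_less[OF \<open>j \<le> j'\<close>])
  moreover have "\<dots> \<le> nstates T * (c + fst_size T)"
    using short c_pos by (intro mult_le_mono2) linarith
  ultimately show ?thesis using n
    by (intro exI[of _ "False # segment j n"] exI[of _ n]) (simp add: tail_cost_def)
qed

lemma decode_rounds:
  assumes "round_inv j \<pi> buf"
  shows "\<exists>\<rho> n. dec_out (config j \<pi> buf) \<rho> = segment j n \<and> j \<le> n \<and> m \<le> image_len n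
     \<and> n \<le> nstates T * (m + 1)
     \<and> length \<rho> \<le> (length p - length \<pi>) + advice_cost T * ((m - image_len j) div c + 1) + tail_cost T c"
  using assms
proof (induction "m - image_len j" arbitrary: j \<pi> buf rule: less_induct)
  case less
  obtain j' where j': "j < j'" "image_len j + c \<le> image_len j'"
    "image_len j' < image_len j + c + fst_size T"
    using next_block[OF c_pos] by blast
  show ?case
  proof (cases "image_len j' \<le> m")
    case False
    then show ?thesis using decode_tail[OF less.prems less_imp_le[OF j'(1)] j'(3)] by fastforce
  next
    case True
    define A where "A = advice (image_len j' - image_len j - c) (delta_hat T (seq_prefix S j'))"
    obtain \<sigma> buf' where round: "dec_run (config j \<pi> buf) (A @ \<sigma>) = config j' (\<pi> @ \<sigma>) buf'"
      "dec_out (config j \<pi> buf) (A @ \<sigma>) = segment j j'" "round_inv j' (\<pi> @ \<sigma>) buf'"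
      using decode_round[OF less.prems less_imp_le[OF j'(1)] j'(2,3) True] unfolding A_def by blast
    have "m - image_len j' < m - image_len j" using True j'(2) c_pos by linarith
    then obtain \<rho> n where IH: "dec_out (config j' (\<pi> @ \<sigma>) buf') \<rho> = segment j' n" "j' \<le> n"
      "m \<le> image_len n" "n \<le> nstates T * (m + 1)"
      "length \<rho> \<le> (length p - length (\<pi> @ \<sigma>)) + advice_cost T * ((m - image_len j') div c + 1)
         + tail_cost T c"
      using less.hyps[OF _ round(3)] by blast
    have "dec_out (config j \<pi> buf) (A @ \<sigma> @ \<rho>) = segment j n"
      using round(1,2) IH(1) segment_append[OF less_imp_le[OF j'(1)] IH(2)]
      by (simp add: machine_out_append flip: append_assoc)
    moreover have "length A \<le> advice_cost T"
      using j'(2,3) delta_hat_less_nstates[OF T, of "seq_prefix S j'"]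
      by (simp add: A_def length_advice advice_cost_def)
    moreover have "length \<pi> + length \<sigma> \<le> length p"
      using round(3) by (auto simp: round_inv_def dest: prefix_length_le)
    moreover have "(m - image_len j') div c + 1 \<le> (m - image_len j) div c"
    proof -
      have "(m - image_len j') + c \<le> m - image_len j" using j'(2) True by linarith
      then have "((m - image_len j') + c) div c \<le> (m - image_len j) div c" by (rule div_le_mono)
      then show ?thesis using c_pos by simp
    qed
    then have "advice_cost T * ((m - image_len j') div c + 1) \<le> advice_cost T * ((m - image_len j) div c)"
      by (rule mult_le_mono2)
    ultimately show ?thesis using IH(2-5) j'(1)
      by (intro exI[of _ "A @ \<sigma> @ \<rho>"] exI[of _ n]) (simp add: algebra_simps)
  qed
qed

lemma decode:
  "\<exists>\<rho> n. dec_out (start B, start T, Ready []) \<rho> = seq_prefix S n \<and> m \<le> image_len n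
     \<and> n \<le> nstates T * (m + 1) \<and> length \<rho> \<le> length p + advice_cost T * (m div c + 1) + tail_cost T c"
proof -
  have "round_inv 0 [] []" using c_pos by (simp add: round_inv_def seq_prefix_def fst_out_def)
  moreover have "config 0 [] [] = (start B, start T, Ready [])"
    by (simp add: config_def seq_prefix_def delta_hat_def)
  moreover have "segment 0 n = seq_prefix S n" for n by (simp add: segment_def seq_prefix_def)
  moreover have "image_len 0 = 0" by (simp add: seq_prefix_def fst_out_def)
  ultimately show ?thesis using decode_rounds[of 0 "[]" "[]"] by fastforce
qed

end

section \<open>Transfer of depth\<close>

lemma decoding_overhead_le:
  fixes \<alpha> :: real and a t c m n N :: nat
  assumes "0 < \<alpha>" "0 < N" "4 * real a \<le> \<alpha> * real c" "n \<le> N * (m + 1)"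
    and "2 * (real a + real t + \<alpha>) \<le> \<alpha> * real m"
  shows "real (a * (m div c + 1) + t) + \<alpha> / (4 * real N) * real n \<le> \<alpha> * real m"
proof -
  have "real (m div c) * c \<le> m"
    by (metis div_times_less_eq_dividend of_nat_le_iff of_nat_mult)
  have "4 * real a * real (m div c) \<le> \<alpha> * real c * real (m div c)"
    using assms(3) by (intro mult_right_mono) auto
  also have "\<dots> \<le> \<alpha> * real m"
    using \<open>real (m div c) * c \<le> m\<close> assms(1) by (simp add: mult.assoc mult.commute[of "real c"])
  finally have advice: "real a * real (m div c) \<le> \<alpha> * m / 4" by simp
  have "\<alpha> / (4 * N) * n \<le> \<alpha> / (4 * N) * (N * (m + 1))"
    using assms(1,4) by (intro mult_left_mono) (simp_all add: of_nat_mono flip: of_nat_mult)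
  also have "\<dots> = \<alpha> * m / 4 + \<alpha> / 4"
    using assms(2) by (simp add: field_simps)
  finally have "\<alpha> / (4 * N) * n \<le> \<alpha> * m / 4 + \<alpha> / 4" .
  moreover have "real (a * (m div c + 1) + t) = real a * real (m div c) + a + t"
    by (simp add: algebra_simps)
  ultimately show ?thesis using advice assms(1,5) by simp
qed

context ilfs_image
begin

lemma FS_preimage_le:
  assumes "wf_fst B" "fst_size B \<le> K" "K \<le> c" "fst_out B p = seq_prefix S' m"
  obtains n where "m \<le> image_len n" "n \<le> nstates T * (m + 1)"
    "FS (decoder_size T c K) (seq_prefix S n)
       \<le> enat (length p + advice_cost T * (m div c + 1) + tail_cost T c)"
proof -
  interpret decoding T S S' B c m p
    using assms by unfold_locales auto
  obtain \<rho> n where \<rho>: "dec_out (start B, start T, Ready []) \<rho> = seq_prefix S n"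
    "m \<le> image_len n" "n \<le> nstates T * (m + 1)"
    "length \<rho> \<le> length p + advice_cost T * (m div c + 1) + tail_cost T c"
    using decode by blast
  obtain E where "wf_fst E" "fst_size E \<le> decoder_size T c K"
    "\<forall>x. fst_out E x = dec_out (start B, start T, Ready []) x"
    using decoder_fst[OF B T B_size assms(2)] by blast
  then have "FS (decoder_size T c K) (seq_prefix S n) \<le> enat (length \<rho>)"
    using \<rho>(1) by (intro FS_le_length) auto
  also have "\<dots> \<le> enat (length p + advice_cost T * (m div c + 1) + tail_cost T c)"
    using \<rho>(4) by simp
  finally show ?thesis using that \<rho>(2,3) by blast
qed

lemma depth_transfer:
  assumes \<alpha>: "0 < \<alpha>" and "K \<le> c" and c: "4 * real (advice_cost T) \<le> \<alpha> * real c"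
    and m: "2 * (real (advice_cost T) + real (tail_cost T c) + \<alpha>) \<le> \<alpha> * real m"
    and deep: "ereal_of_enat (FS K (seq_prefix S' m)) + ereal (\<alpha> * m)
                 \<le> ereal_of_enat (FS (image_prefix_size T k) (seq_prefix S' m))"
  obtains n where "m \<le> image_len n"
    "ereal_of_enat (FS (decoder_size T c K) (seq_prefix S n)) + ereal (\<alpha> / (4 * nstates T) * n)
       \<le> ereal_of_enat (FS k (seq_prefix S n))"
proof (cases "FS K (seq_prefix S' m) = \<infinity>")
  case True
  then have "ereal_of_enat (FS (image_prefix_size T k) (seq_prefix S' m)) = \<infinity>"
    using deep by simp
  then have "FS (image_prefix_size T k) (seq_prefix S' m) = \<infinity>"
    by (cases "FS (image_prefix_size T k) (seq_prefix S' m)") auto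
  moreover obtain n where "m \<le> image_len n" using image_unbounded by blast
  ultimately have "FS k (seq_prefix S n) = \<infinity>"
    using FS_image_le[of m n k] by (simp add: top_enat_def[symmetric] top_unique)
  then show ?thesis using that \<open>m \<le> image_len n\<close> by simp
next
  case False
  then obtain B p where B: "wf_fst B" "fst_size B \<le> K" and program: "fst_out B p = seq_prefix S' m"
    and p: "FS K (seq_prefix S' m) = enat (length p)"
    by (rule FS_attained)
  obtain n where n: "m \<le> image_len n" "n \<le> nstates T * (m + 1)"
    and FS_n: "FS (decoder_size T c K) (seq_prefix S n)
                 \<le> enat (length p + advice_cost T * (m div c + 1) + tail_cost T c)"
    using FS_preimage_le[OF B \<open>K \<le> c\<close> program] by blast
  have "0 < nstates T" using T by (simp add: wf_fst_def)
  then have overhead: "real (advice_cost T * (m div c + 1) + tail_cost T c) + \<alpha> / (4 * nstates T) * n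
      \<le> \<alpha> * m"
    using decoding_overhead_le[OF \<alpha> _ c n(2) m] by simp
  have "ereal_of_enat (FS (decoder_size T c K) (seq_prefix S n)) + ereal (\<alpha> / (4 * nstates T) * n)
      \<le> ereal (real (length p + advice_cost T * (m div c + 1) + tail_cost T c))
         + ereal (\<alpha> / (4 * nstates T) * n)"
    using FS_n by (intro add_right_mono) (metis ereal_of_enat_le_iff ereal_of_enat_simps(1))
  also have "\<dots> \<le> ereal (length p) + ereal (\<alpha> * m)" using overhead by simp
  also have "\<dots> \<le> ereal_of_enat (FS (image_prefix_size T k) (seq_prefix S' m))" using deep p by simp
  also have "\<dots> \<le> ereal_of_enat (FS k (seq_prefix S n))" using FS_image_le[OF n(1)] by simp
  finally show ?thesis using that n(1) by blast
qed

lemma depth_transfer_frequently: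
  assumes \<alpha>: "0 < \<alpha>" and "K \<le> c" and c: "4 * real (advice_cost T) \<le> \<alpha> * real c"
    and deep: "\<exists>\<^sub>\<infinity>m. ereal_of_enat (FS K (seq_prefix S' m)) + ereal (\<alpha> * m)
                 \<le> ereal_of_enat (FS (image_prefix_size T k) (seq_prefix S' m))"
  shows "\<exists>\<^sub>\<infinity>n. ereal_of_enat (FS (decoder_size T c K) (seq_prefix S n))
            + ereal (\<alpha> / (4 * nstates T) * n) \<le> ereal_of_enat (FS k (seq_prefix S n))"
  unfolding INFM_nat_le
proof
  fix n0
  define m0 where "m0 = max (n0 * fst_size T + 1) (nat \<lceil>2 * (advice_cost T + tail_cost T c + \<alpha>) / \<alpha>\<rceil>)"
  obtain m where "m0 \<le> m" and deep_m: "ereal_of_enat (FS K (seq_prefix S' m)) + ereal (\<alpha> * m)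
      \<le> ereal_of_enat (FS (image_prefix_size T k) (seq_prefix S' m))"
    using deep unfolding INFM_nat_le by blast
  have "2 * (real (advice_cost T) + real (tail_cost T c) + \<alpha>) \<le> \<alpha> * real m"
    using \<open>m0 \<le> m\<close> \<alpha> unfolding m0_def by (simp add: divide_le_eq mult.commute)
  then obtain n where n: "m \<le> image_len n" and gap:
    "ereal_of_enat (FS (decoder_size T c K) (seq_prefix S n)) + ereal (\<alpha> / (4 * nstates T) * n)
       \<le> ereal_of_enat (FS k (seq_prefix S n))"
    using depth_transfer[OF \<alpha> \<open>K \<le> c\<close> c _ deep_m] by blast
  have "n0 * fst_size T < m" using \<open>m0 \<le> m\<close> by (simp add: m0_def)
  then have "n0 * fst_size T < n * fst_size T" using n image_len_le[of n] by linarith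
  then show "\<exists>n\<ge>n0. ereal_of_enat (FS (decoder_size T c K) (seq_prefix S n))
      + ereal (\<alpha> / (4 * nstates T) * n) \<le> ereal_of_enat (FS k (seq_prefix S n))"
    using gap by (intro exI[of _ n]) simp
qed

lemma fs_deep_preimage:
  assumes "fs_deep S'"
  shows "fs_deep S"
proof -
  obtain \<alpha> :: real where \<alpha>: "0 < \<alpha>" and deep: "\<forall>k. \<exists>k'. \<exists>\<^sub>\<infinity>m.
      ereal_of_enat (FS k' (seq_prefix S' m)) + ereal (\<alpha> * m) \<le> ereal_of_enat (FS k (seq_prefix S' m))"
    using assms unfolding fs_deep_def by blast
  have "\<exists>k'. \<exists>\<^sub>\<infinity>n. ereal_of_enat (FS k' (seq_prefix S n)) + ereal (\<alpha> / (4 * nstates T) * n)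
      \<le> ereal_of_enat (FS k (seq_prefix S n))" for k
  proof -
    obtain K where K: "\<exists>\<^sub>\<infinity>m. ereal_of_enat (FS K (seq_prefix S' m)) + ereal (\<alpha> * m)
        \<le> ereal_of_enat (FS (image_prefix_size T k) (seq_prefix S' m))"
      using deep by blast
    txt \<open>Each block of \<open>c\<close> output bits costs \<open>advice_cost T\<close> bits of advice, so this choice
      keeps the advice below a quarter of the depth gap.\<close>
    define c where "c = K + nat \<lceil>4 * advice_cost T / \<alpha>\<rceil>"
    have "4 * real (advice_cost T) / \<alpha> \<le> real c"
      unfolding c_def using real_nat_ceiling_ge[of "4 * real (advice_cost T) / \<alpha>"] by linarith
    then have c: "4 * real (advice_cost T) \<le> \<alpha> * real c"
      using \<alpha> by (simp add: divide_le_eq mult.commute)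
    have "\<exists>\<^sub>\<infinity>n. ereal_of_enat (FS (decoder_size T c K) (seq_prefix S n))
        + ereal (\<alpha> / (4 * nstates T) * n) \<le> ereal_of_enat (FS k (seq_prefix S n))"
      by (rule depth_transfer_frequently[OF \<alpha> _ c K]) (simp add: c_def)
    then show ?thesis by blast
  qed
  moreover have "0 < \<alpha> / (4 * nstates T)" using \<alpha> T by (simp add: wf_fst_def)
  ultimately show ?thesis unfolding fs_deep_def by blast
qed

end

theorem theorem2:
  fixes S :: "nat \<Rightarrow> bool" and f :: "(nat \<Rightarrow> bool) \<Rightarrow> (nat \<Rightarrow> bool)"
  assumes "ILFS_computable f"
    and "fs_deep (f S)"
  shows "fs_deep S"
proof -
  obtain T where "wf_fst T" "info_lossless T"
    and image: "\<forall>S. filterlim (\<lambda>n. length (fst_out T (seq_prefix S n))) at_top sequentially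
        \<and> (\<forall>n. fst_out T (seq_prefix S n) = seq_prefix (f S) (length (fst_out T (seq_prefix S n))))"
    using assms(1) unfolding ILFS_computable_def by blast
  then have "ilfs_image T S (f S)"
  proof unfold_locales
    fix M
    have "eventually (\<lambda>n. M \<le> length (fst_out T (seq_prefix S n))) sequentially"
      using image by (simp add: filterlim_at_top)
    then show "\<exists>n. M \<le> length (fst_out T (seq_prefix S n))" by (auto simp: eventually_sequentially)
  qed auto
  then show ?thesis using ilfs_image.fs_deep_preimage assms(2) by blast
qed

end
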